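(* Let $n\ge3$, let the sites of an $n$-qubit chain be partitioned into nonempty consecutive intervals $L=\{1,\dots,a\}$, $C=\{a+1,\dots,a+k\}$, $R=\{a+k+1,\dots,n\}$, let $U$ be a Clifford unitary on the chain with symplectic matrix $W$, and suppose $W$ satisfies the left wall condition around $C$. If $G_{\mathrm{left}}\cap G_{\mathrm{right}}\neq\{0\}$, then there exist an operator $Q_C$ on the qubits of $C$ that is not proportional to the identity and a real number $\theta$ such that $Q=\mathbb{1}_L\otimes Q_C\otimes\mathbb{1}_R$ satisfies $UQU^\dagger=e^{i\theta}Q$ (a non-trivial local conserved, possibly phase-oscillating, quantity supported on $C$).
   Context: Pauli operators modulo phases are identified with $\mathbb{Z}_2^{2n}$ via $(p_1,q_1,\dots,p_n,q_n)\mapsto X^{p_1}Z^{q_1}\otimes\cdots\otimes X^{p_n}Z^{q_n}$; symplectic form $J=\bigoplus_{i=1}^n\begin{pmatrix}0&1\\1&0\end{pmatrix}$; a Clifford unitary $U$ induces $W\in\mathrm{Sp}(2n,\mathbb{Z}_2)$ (i.e. $WJW^T=J$) with $UP_bU^\dagger\propto P_{Wb}$. $V_S$ denotes vectors supported on the site set $S$, $\mathbb{Z}_2^{2n}=V_L\oplus V_C\oplus V_R$, vectors $(l,c,r)$, and $\pi_C$ the projection onto $V_C$. Left wall condition: for all $t\ge1$, $l\in V_L$: $W^t(l,0,0)\in V_L\oplus V_C\oplus\{0\}$. Internal subspaces: $G_{\mathrm{left}}=\pi_C\big(\mathrm{span}\{W^t(l,0,0):t\ge0,\ l\in V_L\}\big)$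 and $G_{\mathrm{right}}=\pi_C\big(\mathrm{span}\{W^t(0,0,r):t\ge0,\ r\in V_R\}\big)$. *)

theory Defs
  imports "Jordan_Normal_Form.Schur_Decomposition" "HOL-Library.Z2"
begin

(* Conventions: sites are 0-based, site i in {0..<n}.
   A vector b in Z_2^(2n) is a "bit vec" of dimension 2n; coordinate 2i is p_i and
   coordinate 2i+1 is q_i, i.e. coordinate j belongs to site j div 2. *)

definition kron :: "complex mat \<Rightarrow> complex mat \<Rightarrow> complex mat" where
  "kron A B = mat (dim_row A * dim_row B) (dim_col A * dim_col B)
     (\<lambda>(i,j). A $$ (i div dim_row B, j div dim_col B) * B $$ (i mod dim_row B, j mod dim_col B))"

definition pauliX :: "complex mat" where
  "pauliX = mat_of_rows_list 2 [[0,1],[1,0]]"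

definition pauliZ :: "complex mat" where
  "pauliZ = mat_of_rows_list 2 [[1,0],[0,-1]]"

definition site_pauli :: "bit \<Rightarrow> bit \<Rightarrow> complex mat" where
  "site_pauli p q = (if p = 1 then pauliX else 1\<^sub>m 2) * (if q = 1 then pauliZ else 1\<^sub>m 2)"

fun pauli :: "nat \<Rightarrow> bit vec \<Rightarrow> complex mat" where
  "pauli 0 b = 1\<^sub>m 1"
| "pauli (Suc m) b = kron (pauli m b) (site_pauli (b $ (2*m)) (b $ (2*m+1)))"

(* symplectic form J = direct sum of [[0,1],[1,0]] *)
definition sympJ :: "nat \<Rightarrow> bit mat" where
  "sympJ n = mat (2*n) (2*n) (\<lambda>(i,j). if i div 2 = j div 2 \<and> i \<noteq> j then 1 else 0)"

definition symplectic :: "nat \<Rightarrow> bit mat \<Rightarrow> bool" where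
  "symplectic n W \<longleftrightarrow> W \<in> carrier_mat (2*n) (2*n) \<and> W * sympJ n * transpose_mat W = sympJ n"

definition unitary_mat :: "nat \<Rightarrow> complex mat \<Rightarrow> bool" where
  "unitary_mat d U \<longleftrightarrow> U \<in> carrier_mat d d \<and> U * mat_adjoint U = 1\<^sub>m d \<and> mat_adjoint U * U = 1\<^sub>m d"

definition clifford_with :: "nat \<Rightarrow> complex mat \<Rightarrow> bit mat \<Rightarrow> bool" where
  "clifford_with n U W \<longleftrightarrow> unitary_mat (2^n) U \<and> symplectic n W \<and>
     (\<forall>b \<in> carrier_vec (2*n). \<exists>c::complex.
        U * pauli n b * mat_adjoint U = c \<cdot>\<^sub>m pauli n (W *\<^sub>v b))"

definition Vsub :: "nat \<Rightarrow> nat set \<Rightarrow> bit vec set" where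
  "Vsub n S = {v \<in> carrier_vec (2*n). \<forall>j < 2*n. j div 2 \<notin> S \<longrightarrow> v $ j = 0}"

definition projS :: "nat \<Rightarrow> nat set \<Rightarrow> bit vec \<Rightarrow> bit vec" where
  "projS n S v = vec (2*n) (\<lambda>j. if j div 2 \<in> S then v $ j else 0)"

(* Z_2-linear span of a set of vectors of dimension d (scalars are only 0 and 1) *)
inductive_set z2span :: "nat \<Rightarrow> bit vec set \<Rightarrow> bit vec set" for d S where
  zero: "0\<^sub>v d \<in> z2span d S"
| add: "v \<in> S \<Longrightarrow> w \<in> z2span d S \<Longrightarrow> v + w \<in> z2span d S"

definition left_wall :: "nat \<Rightarrow> bit mat \<Rightarrow> nat set \<Rightarrow> nat set \<Rightarrow> bool" where
  "left_wall n W L C \<longleftrightarrow> (\<forall>t \<ge> 1. \<forall>l \<in> Vsub n L. (W ^\<^sub>m t) *\<^sub>v l \<in> Vsub n (L \<union> C))"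

definition G_int :: "nat \<Rightarrow> bit mat \<Rightarrow> nat set \<Rightarrow> nat set \<Rightarrow> bit vec set" where
  "G_int n W Side C = projS n C ` z2span (2*n) {(W ^\<^sub>m t) *\<^sub>v v | t v. v \<in> Vsub n Side}"

end

theory Submission
  imports Defs
begin

(* The left wall, together with symplecticity and the finite order of W, yields a right wall:
   W^t never moves a vector supported on R onto L.  The spans of the left and right orbits are
   W-invariant, contain their own C-projections and are supported on L \<union> C resp. C \<union> R, so
   a nonzero v in G_left \<inter> G_right has its whole (periodic) W-orbit inside V_C.  Conjugation by U
   maps P_{W^j v} to a phase times P_{W^(j+1) v}; these Pauli operators all live on C, and the
   product of the phases around the cycle is unimodular because conjugation by U preserves the
   Frobenius norm.  Discrete Fourier combinations of the cycle are then eigenoperators of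
   conjugation by U with eigenvalues on the unit circle, and since they average to a multiple of
   the traceless, nonzero P_v, one of them is not a scalar. *)

section \<open>Kronecker products\<close>

lemma kron_carrier_mat [simp]:
  "kron A B \<in> carrier_mat (dim_row A * dim_row B) (dim_col A * dim_col B)"
  unfolding kron_def by auto

lemma dim_kron [simp]:
  "dim_row (kron A B) = dim_row A * dim_row B" "dim_col (kron A B) = dim_col A * dim_col B"
  unfolding kron_def by auto

lemma index_kron [simp]:
  "i < dim_row A * dim_row B \<Longrightarrow> j < dim_col A * dim_col B \<Longrightarrow>
   kron A B $$ (i, j) = A $$ (i div dim_row B, j div dim_col B) * B $$ (i mod dim_row B, j mod dim_col B)"
  unfolding kron_def by auto

lemma kron_assoc:
  assumes "dim_row B > 0" "dim_col B > 0" "dim_row C > 0" "dim_col C > 0"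
  shows "kron (kron A B) C = kron A (kron B C)"
proof (rule eq_matI)
  fix i j assume i: "i < dim_row (kron A (kron B C))" and j: "j < dim_col (kron A (kron B C))"
  let ?rB = "dim_row B" and ?rC = "dim_row C" and ?cB = "dim_col B" and ?cC = "dim_col C"
  have "i mod (?rB * ?rC) = ?rC * (i div ?rC mod ?rB) + i mod ?rC"
       "j mod (?cB * ?cC) = ?cC * (j div ?cC mod ?cB) + j mod ?cC"
    by (simp_all add: mod_mult2_eq mult.commute[of ?rB] mult.commute[of ?cB])
  then have "i mod (?rB * ?rC) div ?rC = i div ?rC mod ?rB" "i mod (?rB * ?rC) mod ?rC = i mod ?rC"
            "j mod (?cB * ?cC) div ?cC = j div ?cC mod ?cB" "j mod (?cB * ?cC) mod ?cC = j mod ?cC"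
    using assms by simp_all
  moreover have "i div ?rC div ?rB = i div (?rB * ?rC)" "j div ?cC div ?cB = j div (?cB * ?cC)"
    by (simp_all add: div_mult2_eq mult.commute[of ?rB] mult.commute[of ?cB])
  moreover have "i div ?rC < dim_row A * ?rB" "j div ?cC < dim_col A * ?cB"
    using i j by (simp_all add: less_mult_imp_div_less mult.assoc)
  ultimately show "kron (kron A B) C $$ (i, j) = kron A (kron B C) $$ (i, j)"
    using i j assms by (simp add: ac_simps)
qed auto

lemma kron_one_mat: "kron (1\<^sub>m p) (1\<^sub>m q) = 1\<^sub>m (p * q)"
proof (rule eq_matI)
  fix i j assume "i < dim_row (1\<^sub>m (p * q))" "j < dim_col (1\<^sub>m (p * q))"
  moreover from this have "q > 0" by (cases q) auto
  moreover have "(i div q = j div q \<and> i mod q = j mod q) \<longleftrightarrow> i = j"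
    by (metis div_mult_mod_eq)
  ultimately show "kron (1\<^sub>m p) (1\<^sub>m q) $$ (i, j) = 1\<^sub>m (p * q) $$ (i, j)"
    by (auto simp: less_mult_imp_div_less)
qed auto

lemma kron_one_right [simp]: "kron A (1\<^sub>m 1) = A"
  by (rule eq_matI) auto

lemma kron_smult_left: "kron (c \<cdot>\<^sub>m A) B = c \<cdot>\<^sub>m kron A B"
  by (rule eq_matI) (auto simp: less_mult_imp_div_less)

lemma kron_smult_right: "kron A (c \<cdot>\<^sub>m B) = c \<cdot>\<^sub>m kron A B"
proof (rule eq_matI)
  fix i j assume "i < dim_row (c \<cdot>\<^sub>m kron A B)" "j < dim_col (c \<cdot>\<^sub>m kron A B)"
  moreover from this have "dim_row B > 0" "dim_col B > 0" by (auto intro: ccontr)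
  ultimately show "kron A (c \<cdot>\<^sub>m B) $$ (i, j) = (c \<cdot>\<^sub>m kron A B) $$ (i, j)" by simp
qed auto

lemma mult_add_less_mult:
  fixes i i' r r' :: nat
  assumes "i < r" "i' < r'"
  shows "i * r' + i' < r * r'"
proof -
  have "i * r' + i' < Suc i * r'" using assms by simp
  also have "\<dots> \<le> r * r'" using assms by (intro mult_le_mono1) simp
  finally show ?thesis .
qed

lemma index_kron_block:
  assumes "i < dim_row A" "j < dim_col A" "i' < dim_row B" "j' < dim_col B"
  shows "kron A B $$ (i * dim_row B + i', j * dim_col B + j') = A $$ (i, j) * B $$ (i', j')"
  using assms by (simp add: mult_add_less_mult)

lemma kron_neq_zero:
  assumes "A \<noteq> 0\<^sub>m (dim_row A) (dim_col A)" "B \<noteq> 0\<^sub>m (dim_row B) (dim_col B)"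
  shows "kron A B \<noteq> 0\<^sub>m (dim_row A * dim_row B) (dim_col A * dim_col B)"
proof -
  obtain i j where "i < dim_row A" "j < dim_col A" "A $$ (i, j) \<noteq> 0"
    using assms(1) by (metis eq_matI index_zero_mat(1-3))
  moreover obtain i' j' where "i' < dim_row B" "j' < dim_col B" "B $$ (i', j') \<noteq> 0"
    using assms(2) by (metis eq_matI index_zero_mat(1-3))
  ultimately have "kron A B $$ (i * dim_row B + i', j * dim_col B + j') \<noteq> 0"
    "i * dim_row B + i' < dim_row A * dim_row B" "j * dim_col B + j' < dim_col A * dim_col B"
    by (simp_all add: index_kron_block mult_add_less_mult)
  then show ?thesis by (metis index_zero_mat(1))
qed

section \<open>Finite sums of matrices\<close>

definition mat_sum :: "nat \<Rightarrow> nat \<Rightarrow> (nat \<Rightarrow> 'a::comm_monoid_add mat) \<Rightarrow> nat \<Rightarrow> 'a mat" where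
  "mat_sum r c f N = mat r c (\<lambda>(i, l). \<Sum>j<N. f j $$ (i, l))"

lemma mat_sum_carrier [simp]: "mat_sum r c f N \<in> carrier_mat r c"
  unfolding mat_sum_def by simp

lemma dim_mat_sum [simp]: "dim_row (mat_sum r c f N) = r" "dim_col (mat_sum r c f N) = c"
  unfolding mat_sum_def by simp_all

lemma index_mat_sum [simp]: "i < r \<Longrightarrow> l < c \<Longrightarrow> mat_sum r c f N $$ (i, l) = (\<Sum>j<N. f j $$ (i, l))"
  unfolding mat_sum_def by simp

lemma scalar_prod_row_col:
  "A \<in> carrier_mat r m \<Longrightarrow> B \<in> carrier_mat m c \<Longrightarrow> i < r \<Longrightarrow> l < c \<Longrightarrow>
   row A i \<bullet> col B l = (\<Sum>x<m. A $$ (i, x) * B $$ (x, l))"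
  by (simp add: scalar_prod_def atLeast0LessThan)

lemma mult_mat_sum_left:
  fixes A :: "'a::comm_semiring_0 mat"
  assumes A: "A \<in> carrier_mat r m" and f: "\<And>j. f j \<in> carrier_mat m c"
  shows "A * mat_sum m c f N = mat_sum r c (\<lambda>j. A * f j) N"
proof (rule eq_matI)
  fix i l assume "i < dim_row (mat_sum r c (\<lambda>j. A * f j) N)" "l < dim_col (mat_sum r c (\<lambda>j. A * f j) N)"
  then have i: "i < r" and l: "l < c" by simp_all
  have "(A * mat_sum m c f N) $$ (i, l) = (\<Sum>x<m. A $$ (i, x) * (\<Sum>j<N. f j $$ (x, l)))"
    using A i l by (simp add: scalar_prod_row_col[OF A _ i l])
  also have "\<dots> = (\<Sum>j<N. \<Sum>x<m. A $$ (i, x) * f j $$ (x, l))"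
    by (simp add: sum_distrib_left sum.swap[of _ "{..<N}"])
  also have "\<dots> = (\<Sum>j<N. (A * f j) $$ (i, l))"
  proof (rule sum.cong[OF refl])
    fix j show "(\<Sum>x<m. A $$ (i, x) * f j $$ (x, l)) = (A * f j) $$ (i, l)"
      using A f[of j] i l by (simp add: scalar_prod_row_col[OF A f i l])
  qed
  finally show "(A * mat_sum m c f N) $$ (i, l) = mat_sum r c (\<lambda>j. A * f j) N $$ (i, l)"
    using i l by simp
qed (use A in auto)

lemma mult_mat_sum_right:
  fixes B :: "'a::comm_semiring_0 mat"
  assumes B: "B \<in> carrier_mat m c" and f: "\<And>j. f j \<in> carrier_mat r m"
  shows "mat_sum r m f N * B = mat_sum r c (\<lambda>j. f j * B) N"
proof (rule eq_matI)
  fix i l assume "i < dim_row (mat_sum r c (\<lambda>j. f j * B) N)" "l < dim_col (mat_sum r c (\<lambda>j. f j * B) N)"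
  then have i: "i < r" and l: "l < c" by simp_all
  have "(mat_sum r m f N * B) $$ (i, l) = (\<Sum>x<m. (\<Sum>j<N. f j $$ (i, x)) * B $$ (x, l))"
    using B i l by (simp add: scalar_prod_row_col[OF _ B i l])
  also have "\<dots> = (\<Sum>j<N. \<Sum>x<m. f j $$ (i, x) * B $$ (x, l))"
    by (simp add: sum_distrib_right sum.swap[of _ "{..<N}"])
  also have "\<dots> = (\<Sum>j<N. (f j * B) $$ (i, l))"
  proof (rule sum.cong[OF refl])
    fix j show "(\<Sum>x<m. f j $$ (i, x) * B $$ (x, l)) = (f j * B) $$ (i, l)"
      using B f[of j] i l by (simp add: scalar_prod_row_col[OF f B i l])
  qed
  finally show "(mat_sum r m f N * B) $$ (i, l) = mat_sum r c (\<lambda>j. f j * B) N $$ (i, l)"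
    using i l by simp
qed (use B in auto)

lemma mat_sum_smult:
  fixes x :: "'a::comm_semiring_0"
  assumes "\<And>j. f j \<in> carrier_mat r c"
  shows "mat_sum r c (\<lambda>j. x \<cdot>\<^sub>m f j) N = x \<cdot>\<^sub>m mat_sum r c f N"
proof (rule eq_matI)
  fix i l assume "i < dim_row (x \<cdot>\<^sub>m mat_sum r c f N)" "l < dim_col (x \<cdot>\<^sub>m mat_sum r c f N)"
  moreover from this have "(x \<cdot>\<^sub>m f j) $$ (i, l) = x * f j $$ (i, l)" for j
    using assms[of j] by auto
  ultimately show "mat_sum r c (\<lambda>j. x \<cdot>\<^sub>m f j) N $$ (i, l) = (x \<cdot>\<^sub>m mat_sum r c f N) $$ (i, l)"
    by (simp add: sum_distrib_left)
qed auto

lemma mat_sum_shift: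
  fixes f :: "nat \<Rightarrow> 'a::cancel_comm_monoid_add mat"
  assumes "f N = f 0"
  shows "mat_sum r c (\<lambda>j. f (Suc j)) N = mat_sum r c f N"
proof -
  have "(\<Sum>j<N. f (Suc j) $$ (i, l)) = (\<Sum>j<N. f j $$ (i, l))" for i l
    using sum.lessThan_Suc_shift[of "\<lambda>j. f j $$ (i, l)" N] assms by (simp add: add.commute)
  then show ?thesis unfolding mat_sum_def by simp
qed

lemma kron_mat_sum_right:
  assumes f: "\<And>j. f j \<in> carrier_mat r c"
  shows "kron A (mat_sum r c f N) = mat_sum (dim_row A * r) (dim_col A * c) (\<lambda>j. kron A (f j)) N"
proof (rule eq_matI)
  fix i l
  assume "i < dim_row (mat_sum (dim_row A * r) (dim_col A * c) (\<lambda>j. kron A (f j)) N)"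
    "l < dim_col (mat_sum (dim_row A * r) (dim_col A * c) (\<lambda>j. kron A (f j)) N)"
  then have i: "i < dim_row A * r" and l: "l < dim_col A * c" by simp_all
  moreover from this have "r > 0" "c > 0" by (auto intro: ccontr)
  moreover have "dim_row (f j) = r" "dim_col (f j) = c" for j using f[of j] by auto
  ultimately show "kron A (mat_sum r c f N) $$ (i, l)
      = mat_sum (dim_row A * r) (dim_col A * c) (\<lambda>j. kron A (f j)) N $$ (i, l)"
    by (simp add: sum_distrib_left)
qed auto

lemma kron_mat_sum_left:
  assumes f: "\<And>j. f j \<in> carrier_mat r c"
  shows "kron (mat_sum r c f N) B = mat_sum (r * dim_row B) (c * dim_col B) (\<lambda>j. kron (f j) B) N"
proof (rule eq_matI)
  fix i l
  assume "i < dim_row (mat_sum (r * dim_row B) (c * dim_col B) (\<lambda>j. kron (f j) B) N)"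
    "l < dim_col (mat_sum (r * dim_row B) (c * dim_col B) (\<lambda>j. kron (f j) B) N)"
  then have i: "i < r * dim_row B" and l: "l < c * dim_col B" by simp_all
  moreover have "dim_row (f j) = r" "dim_col (f j) = c" for j using f[of j] by auto
  ultimately show "kron (mat_sum r c f N) B $$ (i, l)
      = mat_sum (r * dim_row B) (c * dim_col B) (\<lambda>j. kron (f j) B) N $$ (i, l)"
    by (simp add: sum_distrib_right less_mult_imp_div_less)
qed auto

section \<open>Operators on a block of sites\<close>

definition embed_block :: "nat \<Rightarrow> nat \<Rightarrow> nat \<Rightarrow> complex mat \<Rightarrow> complex mat" where
  "embed_block n a k X = kron (kron (1\<^sub>m (2 ^ a)) X) (1\<^sub>m (2 ^ (n - a - k)))"

lemma embed_block_carrier_mat: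
  assumes "a + k \<le> n" "X \<in> carrier_mat (2 ^ k) (2 ^ k)"
  shows "embed_block n a k X \<in> carrier_mat (2 ^ n) (2 ^ n)"
proof -
  have "(2::nat) ^ a * 2 ^ k * 2 ^ (n - a - k) = 2 ^ n" using assms(1) by (simp flip: power_add)
  then show ?thesis using assms(2) unfolding embed_block_def by (intro carrier_matI) auto
qed

lemma embed_block_smult: "embed_block n a k (c \<cdot>\<^sub>m X) = c \<cdot>\<^sub>m embed_block n a k X"
  unfolding embed_block_def by (simp add: kron_smult_left kron_smult_right)

lemma embed_block_mat_sum:
  assumes "a + k \<le> n" "\<And>j. f j \<in> carrier_mat (2 ^ k) (2 ^ k)"
  shows "embed_block n a k (mat_sum (2 ^ k) (2 ^ k) f N)
    = mat_sum (2 ^ n) (2 ^ n) (\<lambda>j. embed_block n a k (f j)) N"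
proof -
  have "(2::nat) ^ a * 2 ^ k * 2 ^ (n - a - k) = 2 ^ n" using assms(1) by (simp flip: power_add)
  moreover have "kron (1\<^sub>m (2 ^ a)) (f j) \<in> carrier_mat (2 ^ a * 2 ^ k) (2 ^ a * 2 ^ k)" for j
    using assms(2)[of j] kron_carrier_mat[of "1\<^sub>m (2 ^ a)" "f j"] by simp
  ultimately show ?thesis
    unfolding embed_block_def using assms(2) by (simp add: kron_mat_sum_right kron_mat_sum_left)
qed

lemma embed_block_neq_zero:
  assumes "a + k \<le> n" "X \<in> carrier_mat (2 ^ k) (2 ^ k)" "X \<noteq> 0\<^sub>m (2 ^ k) (2 ^ k)"
  shows "embed_block n a k X \<noteq> 0\<^sub>m (2 ^ n) (2 ^ n)"
proof -
  have one: "(1\<^sub>m m :: complex mat) \<noteq> 0\<^sub>m m m" if "m > 0" for m :: nat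
  proof
    assume "(1\<^sub>m m :: complex mat) = 0\<^sub>m m m"
    then have "(1\<^sub>m m :: complex mat) $$ (0, 0) = 0\<^sub>m m m $$ (0, 0)" by (rule arg_cong)
    with that show False by simp
  qed
  have "kron (1\<^sub>m (2 ^ a)) X \<noteq> 0\<^sub>m (2 ^ a * 2 ^ k) (2 ^ a * 2 ^ k)"
    using kron_neq_zero[of "1\<^sub>m (2 ^ a)" X] one[of "2 ^ a"] assms(2,3) by auto
  then have "embed_block n a k X \<noteq> 0\<^sub>m (2 ^ a * 2 ^ k * 2 ^ (n - a - k)) (2 ^ a * 2 ^ k * 2 ^ (n - a - k))"
    unfolding embed_block_def
    using kron_neq_zero[of "kron (1\<^sub>m (2 ^ a)) X" "1\<^sub>m (2 ^ (n - a - k))"] one[of "2 ^ (n - a - k)"] assms(2)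
    by auto
  moreover have "(2::nat) ^ a * 2 ^ k * 2 ^ (n - a - k) = 2 ^ n" using assms(1) by (simp flip: power_add)
  ultimately show ?thesis by simp
qed

section \<open>Trace and Frobenius norm\<close>

definition trace :: "'a::comm_monoid_add mat \<Rightarrow> 'a" where
  "trace A = (\<Sum>i<dim_row A. A $$ (i, i))"

lemma trace_kron:
  assumes "A \<in> carrier_mat n n" "B \<in> carrier_mat m m"
  shows "trace (kron A B) = trace A * trace B"
proof -
  have "trace (kron A B) = (\<Sum>a<n. \<Sum>i\<in>{a * m..<a * m + m}. kron A B $$ (i, i))"
    using assms unfolding trace_def by (simp add: sum.nat_group)
  also have "\<dots> = (\<Sum>a<n. \<Sum>b<m. A $$ (a, a) * B $$ (b, b))"
  proof (rule sum.cong[OF refl])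
    fix a assume "a \<in> {..<n}"
    then have "kron A B $$ (a * m + b, a * m + b) = A $$ (a, a) * B $$ (b, b)" if "b < m" for b
      using assms that index_kron_block[of a A a b B b] by simp
    then show "(\<Sum>i\<in>{a * m..<a * m + m}. kron A B $$ (i, i)) = (\<Sum>b<m. A $$ (a, a) * B $$ (b, b))"
      by (simp add: sum.atLeastLessThan_shift_0 atLeast0LessThan)
  qed
  also have "\<dots> = trace A * trace B"
    using assms unfolding trace_def by (simp add: sum_product)
  finally show ?thesis .
qed

lemma dim_mat_adjoint [simp]:
  "dim_row (mat_adjoint A) = dim_col A" "dim_col (mat_adjoint A) = dim_row A"
  unfolding mat_adjoint_def by (simp_all add: mat_of_rows_def)

lemma index_mat_adjoint [simp]:
  "i < dim_col A \<Longrightarrow> j < dim_row A \<Longrightarrow> mat_adjoint A $$ (i, j) = conjugate (A $$ (j, i))"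
  unfolding mat_adjoint_def by (simp add: mat_of_rows_def)

lemma mat_adjoint_carrier_mat [simp]: "A \<in> carrier_mat r c \<Longrightarrow> mat_adjoint A \<in> carrier_mat c r"
  by (rule carrier_matI) auto

lemma mat_adjoint_mat_adjoint [simp]: "mat_adjoint (mat_adjoint A) = A"
  by (rule eq_matI) auto

lemma mat_adjoint_mult:
  assumes A: "A \<in> carrier_mat r m" and B: "B \<in> carrier_mat m c"
  shows "mat_adjoint (A * B) = mat_adjoint B * mat_adjoint A"
proof (rule eq_matI)
  fix i l assume "i < dim_row (mat_adjoint B * mat_adjoint A)" "l < dim_col (mat_adjoint B * mat_adjoint A)"
  then have i: "i < c" and l: "l < r" using A B by auto
  have "mat_adjoint (A * B) $$ (i, l) = conjugate (\<Sum>x<m. A $$ (l, x) * B $$ (x, i))"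
    using A B i l by (simp add: scalar_prod_row_col[OF A B l i])
  also have "\<dots> = (\<Sum>x<m. mat_adjoint B $$ (i, x) * mat_adjoint A $$ (x, l))"
    using A B i l by (auto simp: sum_conjugate conjugate_dist_mul mult.commute intro: sum.cong)
  also have "\<dots> = (mat_adjoint B * mat_adjoint A) $$ (i, l)"
    using A B i l by (simp add: scalar_prod_row_col[of _ c m _ r])
  finally show "mat_adjoint (A * B) $$ (i, l) = (mat_adjoint B * mat_adjoint A) $$ (i, l)" .
qed (use A B in auto)

lemma trace_mult_comm:
  fixes A :: "'a::comm_semiring_0 mat"
  assumes A: "A \<in> carrier_mat r c" and B: "B \<in> carrier_mat c r"
  shows "trace (A * B) = trace (B * A)"
proof -
  have "trace (A * B) = (\<Sum>i<r. \<Sum>x<c. A $$ (i, x) * B $$ (x, i))"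
    unfolding trace_def using A B by (simp add: scalar_prod_row_col[OF A B])
  also have "\<dots> = (\<Sum>x<c. \<Sum>i<r. B $$ (x, i) * A $$ (i, x))"
    by (subst sum.swap) (simp add: mult.commute)
  also have "\<dots> = trace (B * A)"
    unfolding trace_def using A B by (simp add: scalar_prod_row_col[OF B A])
  finally show ?thesis .
qed

definition frobenius_sq :: "complex mat \<Rightarrow> real" where
  "frobenius_sq X = (\<Sum>i<dim_row X. \<Sum>l<dim_col X. (cmod (X $$ (i, l)))\<^sup>2)"

lemma trace_mult_mat_adjoint: "trace (X * mat_adjoint X) = of_real (frobenius_sq X)"
proof -
  have "trace (X * mat_adjoint X) = (\<Sum>i<dim_row X. \<Sum>l<dim_col X. X $$ (i, l) * cnj (X $$ (i, l)))"
    unfolding trace_def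
    by (simp add: scalar_prod_row_col[of X "dim_row X" "dim_col X" _ "dim_row X"])
  then show ?thesis by (simp only: frobenius_sq_def of_real_sum complex_norm_square)
qed

lemma frobenius_sq_smult: "frobenius_sq (c \<cdot>\<^sub>m X) = (cmod c)\<^sup>2 * frobenius_sq X"
  unfolding frobenius_sq_def by (simp add: norm_mult power_mult_distrib sum_distrib_left)

lemma frobenius_sq_pos:
  assumes "X \<noteq> 0\<^sub>m (dim_row X) (dim_col X)"
  shows "frobenius_sq X > 0"
proof -
  obtain i l where il: "i < dim_row X" "l < dim_col X" "X $$ (i, l) \<noteq> 0"
    using assms by (metis eq_matI index_zero_mat(1-3))
  have "0 < (cmod (X $$ (i, l)))\<^sup>2" using il by simp
  also have "\<dots> \<le> (\<Sum>l<dim_col X. (cmod (X $$ (i, l)))\<^sup>2)"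
    using il by (intro member_le_sum) auto
  also have "\<dots> \<le> frobenius_sq X"
    unfolding frobenius_sq_def using il
    by (intro member_le_sum[where f = "\<lambda>i. \<Sum>l<dim_col X. (cmod (X $$ (i, l)))\<^sup>2"]) (auto intro: sum_nonneg)
  finally show ?thesis .
qed

lemma frobenius_sq_unitary_conj:
  assumes "unitary_mat d U" and X: "X \<in> carrier_mat d d"
  shows "frobenius_sq (U * X * mat_adjoint U) = frobenius_sq X"
proof -
  let ?V = "mat_adjoint U" and ?Y = "mat_adjoint X"
  have U: "U \<in> carrier_mat d d" and VU: "?V * U = 1\<^sub>m d"
    using assms(1) unfolding unitary_mat_def by auto
  have V: "?V \<in> carrier_mat d d" and Y: "?Y \<in> carrier_mat d d" using U X by simp_all
  note square = assoc_mult_mat[of _ d d _ d _ d] mult_carrier_mat[of _ d d _ d]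
  have cancel: "?V * (U * Z) = Z" if "Z \<in> carrier_mat d d" for Z
    using that U V VU by (simp flip: assoc_mult_mat[of ?V d d U d Z d])
  have "mat_adjoint (U * X * ?V) = U * ?Y * ?V"
    using U X V by (simp add: mat_adjoint_mult[of _ d d _ d] square)
  then have "(U * X * ?V) * mat_adjoint (U * X * ?V) = U * (X * ?Y * ?V)"
    using U X V Y by (simp add: square cancel)
  then have "trace ((U * X * ?V) * mat_adjoint (U * X * ?V)) = trace ((X * ?Y * ?V) * U)"
    using U X V Y by (simp add: trace_mult_comm[of U d d] square)
  also have "(X * ?Y * ?V) * U = X * ?Y"
    using U X V Y VU by (simp add: square)
  finally show ?thesis by (simp add: trace_mult_mat_adjoint)
qed

section \<open>Pauli operators\<close>

lemma site_pauli_eq: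
  "site_pauli p q = mat 2 2 (\<lambda>(x, y). if (x = y) = (p = 0) then (if q = 1 \<and> y = 1 then -1 else 1) else 0)"
proof -
  have "pauliX * pauliZ = mat_of_rows_list 2 [[0, -1], [1, 0]]"
    unfolding pauliX_def pauliZ_def
    by (rule eq_matI) (auto simp: mat_of_rows_list_def scalar_prod_def less_Suc_eq numeral_2_eq_2)
  then show ?thesis
    unfolding site_pauli_def
    by (cases p; cases q; intro eq_matI)
      (auto simp: pauliX_def pauliZ_def mat_of_rows_list_def less_Suc_eq numeral_2_eq_2)
qed

lemma dim_site_pauli [simp]: "dim_row (site_pauli p q) = 2" "dim_col (site_pauli p q) = 2"
  by (simp_all add: site_pauli_eq)

lemma site_pauli_carrier_mat [simp]: "site_pauli p q \<in> carrier_mat 2 2"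
  by (rule carrier_matI) simp_all

lemma site_pauli_zero: "site_pauli 0 0 = 1\<^sub>m 2"
  by (simp add: site_pauli_def)

lemma trace_site_pauli: "p \<noteq> 0 \<or> q \<noteq> 0 \<Longrightarrow> trace (site_pauli p q) = 0"
  by (cases p; cases q) (simp_all add: site_pauli_eq trace_def numeral_2_eq_2)

lemma site_pauli_neq_zero: "site_pauli p q \<noteq> 0\<^sub>m 2 2"
proof
  assume "site_pauli p q = 0\<^sub>m 2 2"
  then have "site_pauli p q $$ (0, if p = 0 then 0 else 1) = 0" by simp
  then show False by (cases p; cases q) (simp_all add: site_pauli_eq)
qed

lemma dim_pauli [simp]: "dim_row (pauli m b) = 2 ^ m" "dim_col (pauli m b) = 2 ^ m"
  by (induct m) simp_all

lemma pauli_carrier_mat [simp]: "pauli m b \<in> carrier_mat (2 ^ m) (2 ^ m)"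
  by (rule carrier_matI) simp_all

lemma pauli_neq_zero: "pauli m b \<noteq> 0\<^sub>m (2 ^ m) (2 ^ m)"
proof (induct m)
  case 0
  have "pauli 0 b $$ (0, 0) \<noteq> 0\<^sub>m (2 ^ 0) (2 ^ 0) $$ (0, 0)" by simp
  then show ?case by metis
next
  case (Suc m)
  then show ?case
    using kron_neq_zero[of "pauli m b" "site_pauli (b $ (2 * m)) (b $ (2 * m + 1))"]
      site_pauli_neq_zero by (simp add: mult.commute)
qed

lemma trace_pauli: "\<exists>j < 2 * m. b $ j \<noteq> 0 \<Longrightarrow> trace (pauli m b) = 0"
proof (induct m)
  case (Suc m)
  have "trace (pauli m b) = 0 \<or> trace (site_pauli (b $ (2 * m)) (b $ (2 * m + 1))) = 0"
  proof (cases "\<exists>j < 2 * m. b $ j \<noteq> 0")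
    case False
    with Suc.prems obtain j where "j < 2 * Suc m" "\<not> j < 2 * m" "b $ j \<noteq> 0" by blast
    moreover from this have "j = 2 * m \<or> j = 2 * m + 1" by auto
    ultimately have "b $ (2 * m) \<noteq> 0 \<or> b $ (2 * m + 1) \<noteq> 0" by auto
    then show ?thesis by (simp add: trace_site_pauli)
  qed (use Suc.hyps in simp)
  then show ?case by (auto simp: trace_kron[OF pauli_carrier_mat site_pauli_carrier_mat])
qed simp

lemma pauli_not_scalar:
  assumes "\<exists>j < 2 * m. b $ j \<noteq> 0"
  shows "\<not> (\<exists>c. pauli m b = c \<cdot>\<^sub>m 1\<^sub>m (2 ^ m))"
proof
  assume "\<exists>c. pauli m b = c \<cdot>\<^sub>m 1\<^sub>m (2 ^ m)"
  then obtain c where c: "pauli m b = c \<cdot>\<^sub>m 1\<^sub>m (2 ^ m)" ..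
  have "c * 2 ^ m = trace (pauli m b)" by (simp add: c trace_def)
  then have "c = 0" using trace_pauli[OF assms] by simp
  then have "pauli m b = 0\<^sub>m (2 ^ m) (2 ^ m)" using c by (intro eq_matI) auto
  with pauli_neq_zero show False by blast
qed

lemma pauli_eq_one: "(\<And>j. j < 2 * m \<Longrightarrow> b $ j = 0) \<Longrightarrow> pauli m b = 1\<^sub>m (2 ^ m)"
proof (induct m)
  case (Suc m)
  then have "pauli m b = 1\<^sub>m (2 ^ m)" "b $ (2 * m) = 0" "b $ (2 * m + 1) = 0" by simp_all
  then show ?case by (simp add: site_pauli_zero kron_one_mat mult.commute)
qed simp

lemma pauli_add_idle_sites:
  "(\<And>j. 2 * m \<le> j \<Longrightarrow> j < 2 * (m + r) \<Longrightarrow> b $ j = 0) \<Longrightarrow>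
   pauli (m + r) b = kron (pauli m b) (1\<^sub>m (2 ^ r))"
proof (induct r)
  case (Suc r)
  then have "pauli (m + r) b = kron (pauli m b) (1\<^sub>m (2 ^ r))"
    "b $ (2 * (m + r)) = 0" "b $ (2 * (m + r) + 1) = 0" by simp_all
  then have "pauli (m + Suc r) b = kron (kron (pauli m b) (1\<^sub>m (2 ^ r))) (1\<^sub>m 2)"
    by (simp add: site_pauli_zero)
  also have "\<dots> = kron (pauli m b) (1\<^sub>m (2 ^ Suc r))"
    by (simp add: kron_assoc kron_one_mat mult.commute)
  finally show ?case .
qed (simp only: add_0_right power_0 kron_one_right)

lemma pauli_add_idle_prefix:
  "(\<And>j. j < 2 * a \<Longrightarrow> b $ j = 0) \<Longrightarrow> (\<And>i. i < 2 * m \<Longrightarrow> c $ i = b $ (2 * a + i)) \<Longrightarrow>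
   pauli (a + m) b = kron (1\<^sub>m (2 ^ a)) (pauli m c)"
proof (induct m)
  case 0
  then show ?case by (simp only: add_0_right pauli.simps(1) kron_one_right pauli_eq_one)
next
  case (Suc m)
  then have "pauli (a + m) b = kron (1\<^sub>m (2 ^ a)) (pauli m c)"
    "b $ (2 * (a + m)) = c $ (2 * m)" "b $ (2 * (a + m) + 1) = c $ (2 * m + 1)"
    by (simp_all add: algebra_simps)
  then have "pauli (a + Suc m) b
      = kron (kron (1\<^sub>m (2 ^ a)) (pauli m c)) (site_pauli (c $ (2 * m)) (c $ (2 * m + 1)))"
    by simp
  then show ?case by (simp add: kron_assoc)
qed

definition restrict_sites :: "nat \<Rightarrow> nat \<Rightarrow> bit vec \<Rightarrow> bit vec" where
  "restrict_sites a k b = vec (2 * k) (\<lambda>i. b $ (2 * a + i))"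

lemma pauli_supported_block:
  assumes "a + k \<le> n" and "b \<in> Vsub n {a..<a + k}"
  shows "pauli n b = embed_block n a k (pauli k (restrict_sites a k b))"
proof -
  have vanish: "b $ j = 0" if "j < 2 * n" "j div 2 \<notin> {a..<a + k}" for j
    using assms(2) that unfolding Vsub_def by blast
  have "pauli ((a + k) + (n - a - k)) b = kron (pauli (a + k) b) (1\<^sub>m (2 ^ (n - a - k)))"
    using assms(1) by (intro pauli_add_idle_sites vanish) auto
  moreover have "pauli (a + k) b = kron (1\<^sub>m (2 ^ a)) (pauli k (restrict_sites a k b))"
    using assms(1) by (intro pauli_add_idle_prefix vanish) (auto simp: restrict_sites_def)
  ultimately show ?thesis using assms(1) by (simp add: embed_block_def)
qed

section \<open>Matrix powers\<close>

lemma pow_mat_add: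
  fixes A :: "'a::semiring_1 mat"
  assumes "A \<in> carrier_mat n n"
  shows "A ^\<^sub>m (s + t) = A ^\<^sub>m s * A ^\<^sub>m t"
proof -
  interpret semiring "ring_mat TYPE('a) n ()" by (rule semiring_mat)
  show ?thesis
    using assms nat_pow_mult[of A s t] by (simp add: pow_mat_ring_pow[OF assms, where b = "()"] ring_mat_simps)
qed

lemma pow_mat_mult:
  fixes A :: "'a::semiring_1 mat"
  assumes "A \<in> carrier_mat n n"
  shows "A ^\<^sub>m (s * t) = (A ^\<^sub>m s) ^\<^sub>m t"
proof -
  let ?R = "ring_mat TYPE('a) n ()"
  interpret semiring ?R by (rule semiring_mat)
  have "A ^\<^sub>m (s * t) = A [^]\<^bsub>?R\<^esub> (s * t)" by (rule pow_mat_ring_pow[OF assms])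
  also have "\<dots> = (A [^]\<^bsub>?R\<^esub> s) [^]\<^bsub>?R\<^esub> t"
    using assms by (simp add: nat_pow_pow ring_mat_simps)
  also have "\<dots> = (A ^\<^sub>m s) ^\<^sub>m t"
    unfolding pow_mat_ring_pow[OF assms, where k = s and b = "()", symmetric]
    by (rule pow_mat_ring_pow[OF pow_carrier_mat[OF assms], symmetric])
  finally show ?thesis .
qed

lemma pow_mat_Suc_left:
  fixes A :: "'a::semiring_1 mat"
  assumes "A \<in> carrier_mat n n"
  shows "A ^\<^sub>m Suc t = A * A ^\<^sub>m t"
  using pow_mat_add[OF assms, of 1 t] assms by simp

lemma one_pow_mat [simp]: "(1\<^sub>m n :: 'a::semiring_1 mat) ^\<^sub>m t = 1\<^sub>m n"
  by (induct t) simp_all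

lemma pow_mat_left_inverse:
  fixes A B :: "'a::semiring_1 mat"
  assumes A: "A \<in> carrier_mat n n" and B: "B \<in> carrier_mat n n" and BA: "B * A = 1\<^sub>m n"
  shows "B ^\<^sub>m t * A ^\<^sub>m t = 1\<^sub>m n"
proof (induct t)
  case (Suc t)
  have "B ^\<^sub>m Suc t * A ^\<^sub>m Suc t = (B ^\<^sub>m t * B) * (A * A ^\<^sub>m t)"
    unfolding pow_mat_Suc_left[OF A] by simp
  also have "\<dots> = B ^\<^sub>m t * ((B * A) * A ^\<^sub>m t)"
    using A B by (simp add: assoc_mult_mat[of _ n n _ n _ n])
  finally have "B ^\<^sub>m Suc t * A ^\<^sub>m Suc t = B ^\<^sub>m t * ((B * A) * A ^\<^sub>m t)" .
  then show ?case using Suc A BA by simp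
qed (use A B in simp)

lemma finite_carrier_mat:
  assumes "finite (UNIV :: 'a set)"
  shows "finite (carrier_mat r c :: 'a mat set)"
proof -
  let ?D = "{0..<r} \<times> {0..<c}"
  have "carrier_mat r c \<subseteq> (\<lambda>f. mat r c f) ` (?D \<rightarrow>\<^sub>E (UNIV :: 'a set))"
  proof
    fix A :: "'a mat" assume A: "A \<in> carrier_mat r c"
    then have "A = mat r c (restrict (\<lambda>ij. A $$ ij) ?D)" by (intro eq_matI) simp_all
    moreover have "restrict (\<lambda>ij. A $$ ij) ?D \<in> ?D \<rightarrow>\<^sub>E UNIV" by simp
    ultimately show "A \<in> (\<lambda>f. mat r c f) ` (?D \<rightarrow>\<^sub>E UNIV)" by (rule image_eqI)
  qed
  moreover have "finite (?D \<rightarrow>\<^sub>E (UNIV :: 'a set))"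
    using assms by (intro finite_PiE) auto
  ultimately show ?thesis by (rule finite_subset[OF _ finite_imageI])
qed

lemma pow_mat_finite_order:
  fixes A B :: "'a::semiring_1 mat"
  assumes "finite (UNIV :: 'a set)"
    and A: "A \<in> carrier_mat n n" and B: "B \<in> carrier_mat n n" and BA: "B * A = 1\<^sub>m n"
  shows "\<exists>N \<ge> 1. A ^\<^sub>m N = 1\<^sub>m n"
proof -
  have "range (\<lambda>t. A ^\<^sub>m t) \<subseteq> carrier_mat n n" using A by auto
  then have "\<not> inj (\<lambda>t. A ^\<^sub>m t)"
    using finite_carrier_mat[OF assms(1)] finite_imageD infinite_UNIV_nat finite_subset by metis
  then obtain i j where ij: "i < j" "A ^\<^sub>m i = A ^\<^sub>m j"
    unfolding inj_def by (metis linorder_neq_iff)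
  have "A ^\<^sub>m (j - i) = (B ^\<^sub>m i * A ^\<^sub>m i) * A ^\<^sub>m (j - i)"
    using pow_mat_left_inverse[OF A B BA] A by simp
  also have "\<dots> = B ^\<^sub>m i * (A ^\<^sub>m i * A ^\<^sub>m (j - i))"
    using A B by (simp add: assoc_mult_mat[of _ n n _ n _ n])
  also have "\<dots> = B ^\<^sub>m i * A ^\<^sub>m j"
    using ij(1) by (simp add: pow_mat_add[OF A, symmetric])
  also have "\<dots> = 1\<^sub>m n"
    using ij(2) pow_mat_left_inverse[OF A B BA, of i] by simp
  finally show ?thesis using ij by (intro exI[of _ "j - i"]) auto
qed

section \<open>The symplectic form\<close>

definition site_partner :: "nat \<Rightarrow> nat" where
  "site_partner j = (if even j then Suc j else j - 1)"

lemma site_partner_div [simp]: "site_partner j div 2 = j div 2"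
  unfolding site_partner_def by (cases "even j") (auto elim: oddE)

lemma site_partner_site_partner [simp]: "site_partner (site_partner j) = j"
  unfolding site_partner_def by (cases "even j") (auto elim: oddE)

lemma site_partner_inject [simp]: "site_partner i = site_partner j \<longleftrightarrow> i = j"
  by (metis site_partner_site_partner)

lemma site_partner_less: "j < 2 * n \<Longrightarrow> site_partner j < 2 * n"
  unfolding site_partner_def by (cases "even j") (auto elim!: evenE)

lemma site_partner_iff: "(i div 2 = j div 2 \<and> i \<noteq> j) \<longleftrightarrow> j = site_partner i"
  unfolding site_partner_def by (cases "even i") (auto elim!: evenE oddE)

lemma row_sympJ: "i < 2 * n \<Longrightarrow> row (sympJ n) i = unit_vec (2 * n) (site_partner i)"
  unfolding sympJ_def using site_partner_iff[of i] by (intro eq_vecI) (auto simp: unit_vec_def)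

lemma col_sympJ: "j < 2 * n \<Longrightarrow> col (sympJ n) j = unit_vec (2 * n) (site_partner j)"
proof -
  have "(i div 2 = j div 2 \<and> i \<noteq> j) \<longleftrightarrow> i = site_partner j" for i
    using site_partner_iff[of j i] by auto
  then show "j < 2 * n \<Longrightarrow> ?thesis" unfolding sympJ_def by (intro eq_vecI) (auto simp: unit_vec_def)
qed

lemma dim_sympJ [simp]: "dim_row (sympJ n) = 2 * n" "dim_col (sympJ n) = 2 * n"
  unfolding sympJ_def by simp_all

lemma sympJ_carrier_mat [simp]: "sympJ n \<in> carrier_mat (2 * n) (2 * n)"
  by (rule carrier_matI) simp_all

lemma sympJ_mult_vec:
  "y \<in> carrier_vec (2 * n) \<Longrightarrow> sympJ n *\<^sub>v y = vec (2 * n) (\<lambda>i. y $ site_partner i)"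
  by (intro eq_vecI) (simp_all add: row_sympJ site_partner_less)

lemma sympJ_mult_vec_carrier [simp]: "sympJ n *\<^sub>v y \<in> carrier_vec (2 * n)"
  by (rule carrier_vecI) simp

lemma sympJ_mult_sympJ: "sympJ n * sympJ n = 1\<^sub>m (2 * n)"
  by (intro eq_matI) (auto simp: row_sympJ col_sympJ site_partner_less)

lemma symplectic_left_inverse:
  assumes "symplectic n W"
  shows "(sympJ n * transpose_mat W * sympJ n) * W = 1\<^sub>m (2 * n)"
proof (rule mat_mult_left_right_inverse)
  have W: "W \<in> carrier_mat (2 * n) (2 * n)" and WJW: "W * sympJ n * transpose_mat W = sympJ n"
    using assms unfolding symplectic_def by auto
  have "W * (sympJ n * transpose_mat W * sympJ n) = (W * sympJ n * transpose_mat W) * sympJ n"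
    using W by (simp add: assoc_mult_mat[of _ "2 * n" "2 * n" _ "2 * n" _ "2 * n"]
        mult_carrier_mat[of _ "2 * n" "2 * n" _ "2 * n"])
  then show "W * (sympJ n * transpose_mat W * sympJ n) = 1\<^sub>m (2 * n)"
    by (simp add: WJW sympJ_mult_sympJ)
qed (use assms in \<open>auto simp: symplectic_def\<close>)

lemma symplectic_transpose:
  assumes "symplectic n W"
  shows "transpose_mat W * sympJ n * W = sympJ n"
proof -
  let ?J = "sympJ n"
  have W: "W \<in> carrier_mat (2 * n) (2 * n)" using assms unfolding symplectic_def by auto
  have "transpose_mat W * ?J * W = (?J * ?J) * (transpose_mat W * ?J * W)"
    using W by (simp add: sympJ_mult_sympJ)
  also have "\<dots> = ?J * ((?J * transpose_mat W * ?J) * W)"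
    using W by (simp add: assoc_mult_mat[of _ "2 * n" "2 * n" _ "2 * n" _ "2 * n"]
        mult_carrier_mat[of _ "2 * n" "2 * n" _ "2 * n"])
  also have "\<dots> = ?J" using symplectic_left_inverse[OF assms] by simp
  finally show ?thesis .
qed

lemma symplectic_finite_order:
  assumes "symplectic n W"
  shows "\<exists>N \<ge> 1. W ^\<^sub>m N = 1\<^sub>m (2 * n)"
proof (rule pow_mat_finite_order)
  have bits: "(UNIV :: bit set) = {0, 1}" by (auto intro: bit.exhaust)
  show "finite (UNIV :: bit set)" unfolding bits by simp
  show "(sympJ n * transpose_mat W * sympJ n) * W = 1\<^sub>m (2 * n)" by (rule symplectic_left_inverse[OF assms])
qed (use assms in \<open>auto simp: symplectic_def\<close>)

definition symp_form :: "nat \<Rightarrow> bit vec \<Rightarrow> bit vec \<Rightarrow> bit" where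
  "symp_form n x y = x \<bullet> (sympJ n *\<^sub>v y)"

lemma symp_form_partner_unit:
  assumes "x \<in> carrier_vec (2 * n)" "j < 2 * n"
  shows "symp_form n x (unit_vec (2 * n) (site_partner j)) = x $ j"
proof -
  have "sympJ n *\<^sub>v unit_vec (2 * n) (site_partner j) = unit_vec (2 * n) j"
    using assms(2) by (intro eq_vecI) (auto simp: sympJ_mult_vec site_partner_less unit_vec_def)
  then show ?thesis using assms unfolding symp_form_def by simp
qed

lemma symp_form_mult_symplectic:
  assumes "symplectic n W" and x: "x \<in> carrier_vec (2 * n)" and y: "y \<in> carrier_vec (2 * n)"
  shows "symp_form n (W *\<^sub>v x) (W *\<^sub>v y) = symp_form n x y"
proof -
  let ?J = "sympJ n"
  have W: "W \<in> carrier_mat (2 * n) (2 * n)" using assms(1) unfolding symplectic_def by auto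
  have JWy: "?J *\<^sub>v (W *\<^sub>v y) \<in> carrier_vec (2 * n)" by simp
  have "symp_form n (W *\<^sub>v x) (W *\<^sub>v y) = (?J *\<^sub>v (W *\<^sub>v y)) \<bullet> (W *\<^sub>v x)"
    unfolding symp_form_def using W x JWy by (intro comm_scalar_prod[of _ "2 * n"]) simp_all
  also have "\<dots> = (transpose_mat W *\<^sub>v (?J *\<^sub>v (W *\<^sub>v y))) \<bullet> x"
    by (rule transpose_vec_mult_scalar[OF W x JWy, symmetric])
  also have "transpose_mat W *\<^sub>v (?J *\<^sub>v (W *\<^sub>v y)) = (transpose_mat W * ?J * W) *\<^sub>v y"
    using W y by (simp add: assoc_mult_mat_vec[of _ "2 * n" "2 * n" _ "2 * n"]
        mult_carrier_mat[of _ "2 * n" "2 * n" _ "2 * n"])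
  also have "((transpose_mat W * ?J * W) *\<^sub>v y) \<bullet> x = symp_form n x y"
    unfolding symplectic_transpose[OF assms(1)] symp_form_def using x y
    by (intro comm_scalar_prod[of _ "2 * n"]) simp_all
  finally show ?thesis .
qed

lemma symp_form_pow_symplectic:
  assumes "symplectic n W" "x \<in> carrier_vec (2 * n)" "y \<in> carrier_vec (2 * n)"
  shows "symp_form n (W ^\<^sub>m t *\<^sub>v x) (W ^\<^sub>m t *\<^sub>v y) = symp_form n x y"
proof -
  have W: "W \<in> carrier_mat (2 * n) (2 * n)" using assms(1) unfolding symplectic_def by auto
  have step: "W ^\<^sub>m Suc t *\<^sub>v z = W ^\<^sub>m t *\<^sub>v (W *\<^sub>v z)" if "z \<in> carrier_vec (2 * n)" for t z
    using W that by (simp add: assoc_mult_mat_vec[of _ "2 * n" "2 * n" _ "2 * n"])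
  show ?thesis
    using assms(2,3)
  proof (induct t arbitrary: x y)
    case (Suc t)
    then show ?case using W step symp_form_mult_symplectic[OF assms(1)] by simp
  qed (use W in simp)
qed

section \<open>Walls and orbit spans\<close>

lemma Vsub_carrier: "v \<in> Vsub n S \<Longrightarrow> v \<in> carrier_vec (2 * n)"
  unfolding Vsub_def by simp

lemma Vsub_vanish: "v \<in> Vsub n S \<Longrightarrow> j < 2 * n \<Longrightarrow> j div 2 \<notin> S \<Longrightarrow> v $ j = 0"
  unfolding Vsub_def by simp

lemma VsubI:
  "v \<in> carrier_vec (2 * n) \<Longrightarrow> (\<And>j. j < 2 * n \<Longrightarrow> j div 2 \<notin> S \<Longrightarrow> v $ j = 0) \<Longrightarrow> v \<in> Vsub n S"
  unfolding Vsub_def by simp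

lemma zero_Vsub: "0\<^sub>v (2 * n) \<in> Vsub n S"
  unfolding Vsub_def by simp

lemma add_Vsub: "v \<in> Vsub n S \<Longrightarrow> w \<in> Vsub n S \<Longrightarrow> v + w \<in> Vsub n S"
  unfolding Vsub_def by auto

lemma Vsub_mono: "S \<subseteq> T \<Longrightarrow> Vsub n S \<subseteq> Vsub n T"
  unfolding Vsub_def by auto

lemma Vsub_Int: "Vsub n S \<inter> Vsub n T = Vsub n (S \<inter> T)"
  unfolding Vsub_def by auto

lemma sympJ_mult_Vsub: "y \<in> Vsub n S \<Longrightarrow> sympJ n *\<^sub>v y \<in> Vsub n S"
  by (intro VsubI) (auto simp: sympJ_mult_vec Vsub_carrier site_partner_less Vsub_vanish)

lemma symp_form_Vsub_disjoint:
  assumes "x \<in> Vsub n S" "y \<in> Vsub n T" "S \<inter> T = {}"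
  shows "symp_form n x y = 0"
proof -
  have Jy: "sympJ n *\<^sub>v y \<in> Vsub n T" by (rule sympJ_mult_Vsub[OF assms(2)])
  have "x $ i * (sympJ n *\<^sub>v y) $ i = 0" if "i < 2 * n" for i
    using that assms(3) Vsub_vanish[OF assms(1) that] Vsub_vanish[OF Jy that] by auto
  then show ?thesis
    unfolding symp_form_def scalar_prod_def using Jy Vsub_carrier by (intro sum.neutral) auto
qed

lemma left_wall_pow:
  assumes "left_wall n W L C" "W \<in> carrier_mat (2 * n) (2 * n)" "l \<in> Vsub n L"
  shows "W ^\<^sub>m t *\<^sub>v l \<in> Vsub n (L \<union> C)"
proof (cases "t = 0")
  case True
  then show ?thesis using assms(2,3) Vsub_carrier[OF assms(3)] Vsub_mono[of L "L \<union> C" n] by auto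
qed (use assms in \<open>auto simp: left_wall_def\<close>)

text \<open>Coordinate j of W^t r is its symplectic pairing with the unit vector e at the partner
  coordinate of j.  As W^N = 1, e = W^t y for y = W^((N - 1) t) e, which the left wall puts on
  L \<union> C; by invariance the pairing equals that of r and y, which have disjoint supports.\<close>
lemma right_wall_from_left_wall:
  assumes symp: "symplectic n W" and wall: "left_wall n W L C"
    and cover: "{0..<n} \<subseteq> L \<union> C \<union> R" and disj: "R \<inter> (L \<union> C) = {}"
    and r: "r \<in> Vsub n R"
  shows "W ^\<^sub>m t *\<^sub>v r \<in> Vsub n (C \<union> R)"
proof (rule VsubI)
  have W: "W \<in> carrier_mat (2 * n) (2 * n)" using symp unfolding symplectic_def by auto
  have rc: "r \<in> carrier_vec (2 * n)" using r by (rule Vsub_carrier)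
  show Wr: "W ^\<^sub>m t *\<^sub>v r \<in> carrier_vec (2 * n)"
    using W rc by (metis mult_mat_vec_carrier pow_carrier_mat)
  obtain N where N: "N \<ge> 1" "W ^\<^sub>m N = 1\<^sub>m (2 * n)" using symplectic_finite_order[OF symp] by blast
  fix j assume j: "j < 2 * n" "j div 2 \<notin> C \<union> R"
  moreover have "j div 2 < n" using j(1) by simp
  ultimately have "j div 2 \<in> L" using cover by auto
  define e :: "bit vec" where "e = unit_vec (2 * n) (site_partner j)"
  have eL: "e \<in> Vsub n L"
    unfolding e_def using \<open>j div 2 \<in> L\<close> by (intro VsubI) (auto simp: site_partner_less j(1))
  define y where "y = W ^\<^sub>m ((N - 1) * t) *\<^sub>v e"
  have yLC: "y \<in> Vsub n (L \<union> C)" unfolding y_def by (rule left_wall_pow[OF wall W eL])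
  have "W ^\<^sub>m t *\<^sub>v y = (W ^\<^sub>m (t + (N - 1) * t)) *\<^sub>v e"
    unfolding y_def using W
    by (simp add: pow_mat_add[OF W] e_def assoc_mult_mat_vec[of _ "2 * n" "2 * n" _ "2 * n"])
  also have "t + (N - 1) * t = N * t" using N(1) by (simp add: algebra_simps)
  finally have "W ^\<^sub>m t *\<^sub>v y = e" using N(2) by (simp add: pow_mat_mult[OF W] e_def)
  then have "(W ^\<^sub>m t *\<^sub>v r) $ j = symp_form n (W ^\<^sub>m t *\<^sub>v r) (W ^\<^sub>m t *\<^sub>v y)"
    using symp_form_partner_unit[OF Wr j(1)] by (simp add: e_def)
  also have "\<dots> = symp_form n r y"
    using symp rc yLC Vsub_carrier by (simp add: symp_form_pow_symplectic)
  also have "\<dots> = 0" using symp_form_Vsub_disjoint[OF r yLC disj] .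
  finally show "(W ^\<^sub>m t *\<^sub>v r) $ j = 0" .
qed

definition orbit_span :: "nat \<Rightarrow> bit mat \<Rightarrow> nat set \<Rightarrow> bit vec set" where
  "orbit_span n W S = z2span (2 * n) {(W ^\<^sub>m t) *\<^sub>v v | t v. v \<in> Vsub n S}"

lemma G_int_orbit_span: "G_int n W S C = projS n C ` orbit_span n W S"
  unfolding G_int_def orbit_span_def ..

lemma z2span_subset:
  assumes "0\<^sub>v d \<in> X" "\<And>v w. v \<in> X \<Longrightarrow> w \<in> X \<Longrightarrow> v + w \<in> X" "G \<subseteq> X"
  shows "z2span d G \<subseteq> X"
proof
  fix x assume "x \<in> z2span d G"
  then show "x \<in> X" by induct (use assms in auto)
qed

lemma orbit_span_Vsub:
  assumes "\<And>t v. v \<in> Vsub n S \<Longrightarrow> W ^\<^sub>m t *\<^sub>v v \<in> Vsub n T"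
  shows "orbit_span n W S \<subseteq> Vsub n T"
  unfolding orbit_span_def using assms by (intro z2span_subset zero_Vsub) (auto intro: add_Vsub)

lemma orbit_span_carrier:
  assumes "W \<in> carrier_mat (2 * n) (2 * n)"
  shows "orbit_span n W S \<subseteq> carrier_vec (2 * n)"
proof -
  have "Vsub n UNIV = carrier_vec (2 * n)" unfolding Vsub_def by auto
  moreover have "orbit_span n W S \<subseteq> Vsub n UNIV"
  proof (rule orbit_span_Vsub)
    fix t v assume "v \<in> Vsub n S"
    then have "W ^\<^sub>m t *\<^sub>v v \<in> carrier_vec (2 * n)"
      using assms by (metis Vsub_carrier mult_mat_vec_carrier pow_carrier_mat)
    then show "W ^\<^sub>m t *\<^sub>v v \<in> Vsub n UNIV" unfolding Vsub_def by simp
  qed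
  ultimately show ?thesis by simp
qed

lemma orbit_span_pow:
  assumes W: "W \<in> carrier_mat (2 * n) (2 * n)" and x: "x \<in> orbit_span n W S"
  shows "W ^\<^sub>m t *\<^sub>v x \<in> orbit_span n W S"
  using x unfolding orbit_span_def
proof induct
  case zero
  have "W ^\<^sub>m t *\<^sub>v 0\<^sub>v (2 * n) = 0\<^sub>v (2 * n)" using W by (intro eq_vecI) auto
  then show ?case by (simp add: z2span.zero)
next
  case (add v w)
  then obtain s u where v: "v = W ^\<^sub>m s *\<^sub>v u" and u: "u \<in> Vsub n S" by blast
  have uc: "u \<in> carrier_vec (2 * n)" using u by (rule Vsub_carrier)
  have vc: "v \<in> carrier_vec (2 * n)" using W uc v by (metis mult_mat_vec_carrier pow_carrier_mat)
  have wc: "w \<in> carrier_vec (2 * n)"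
    using add(2) orbit_span_carrier[OF W] unfolding orbit_span_def by blast
  have "W ^\<^sub>m t *\<^sub>v v = (W ^\<^sub>m t * W ^\<^sub>m s) *\<^sub>v u"
    unfolding v using W uc by (simp add: assoc_mult_mat_vec[of _ "2 * n" "2 * n" _ "2 * n"])
  also have "\<dots> = W ^\<^sub>m (t + s) *\<^sub>v u" by (simp only: pow_mat_add[OF W])
  finally have "W ^\<^sub>m t *\<^sub>v (v + w) = W ^\<^sub>m (t + s) *\<^sub>v u + W ^\<^sub>m t *\<^sub>v w"
    using W vc wc by (metis mult_add_distrib_mat_vec pow_carrier_mat)
  then show ?case using u add(3) by (auto intro: z2span.add)
qed

lemma orbit_span_add_Vsub:
  assumes W: "W \<in> carrier_mat (2 * n) (2 * n)" and u: "u \<in> Vsub n S" and x: "x \<in> orbit_span n W S"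
  shows "u + x \<in> orbit_span n W S"
proof -
  have "u = W ^\<^sub>m 0 *\<^sub>v u" using W Vsub_carrier[OF u] by simp
  then have "u \<in> {(W ^\<^sub>m t) *\<^sub>v v | t v. v \<in> Vsub n S}" using u by blast
  then show ?thesis using x unfolding orbit_span_def by (rule z2span.add)
qed

lemma projS_orbit_span:
  assumes W: "W \<in> carrier_mat (2 * n) (2 * n)"
    and s: "s \<in> orbit_span n W S" and sSC: "s \<in> Vsub n (S \<union> C)"
  shows "projS n C s \<in> orbit_span n W S"
proof -
  have sc: "s \<in> carrier_vec (2 * n)" using sSC by (rule Vsub_carrier)
  have "s + projS n C s \<in> Vsub n S"
    using sc Vsub_vanish[OF sSC] by (intro VsubI) (auto simp: projS_def)
  then have "(s + projS n C s) + s \<in> orbit_span n W S"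
    by (rule orbit_span_add_Vsub[OF W _ s])
  moreover have "(s + projS n C s) + s = projS n C s"
    using sc by (intro eq_vecI) (auto simp: projS_def add.commute add.left_commute)
  ultimately show ?thesis by simp
qed

lemma G_int_orbit_stays_in_center:
  assumes symp: "symplectic n W" and wall: "left_wall n W L C"
    and cover: "{0..<n} \<subseteq> L \<union> C \<union> R" and disj: "R \<inter> (L \<union> C) = {}"
    and vL: "v \<in> G_int n W L C" and vR: "v \<in> G_int n W R C"
  shows "W ^\<^sub>m t *\<^sub>v v \<in> Vsub n C"
proof -
  have W: "W \<in> carrier_mat (2 * n) (2 * n)" using symp unfolding symplectic_def by auto
  have spanL: "orbit_span n W L \<subseteq> Vsub n (L \<union> C)"
    by (intro orbit_span_Vsub left_wall_pow[OF wall W])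
  have spanR: "orbit_span n W R \<subseteq> Vsub n (R \<union> C)"
    using right_wall_from_left_wall[OF symp wall cover disj] by (intro orbit_span_Vsub) (simp add: Un_commute)
  obtain sL where sL: "sL \<in> orbit_span n W L" "v = projS n C sL"
    using vL unfolding G_int_orbit_span by blast
  obtain sR where sR: "sR \<in> orbit_span n W R" "v = projS n C sR"
    using vR unfolding G_int_orbit_span by blast
  have "v \<in> orbit_span n W L"
    unfolding sL(2) using sL(1) spanL by (intro projS_orbit_span[OF W]) auto
  moreover have "v \<in> orbit_span n W R"
    unfolding sR(2) using sR(1) spanR by (intro projS_orbit_span[OF W]) auto
  ultimately have "W ^\<^sub>m t *\<^sub>v v \<in> orbit_span n W L" "W ^\<^sub>m t *\<^sub>v v \<in> orbit_span n W R"
    by (simp_all add: orbit_span_pow[OF W])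
  then have "W ^\<^sub>m t *\<^sub>v v \<in> Vsub n ((L \<union> C) \<inter> (R \<union> C))"
    using spanL spanR Vsub_Int by blast
  moreover have "(L \<union> C) \<inter> (R \<union> C) \<subseteq> C" using disj by auto
  ultimately show ?thesis using Vsub_mono by blast
qed

section \<open>Eigenoperators of a conjugation cycle\<close>

lemma unitary_conj_cycle_unimodular:
  assumes U: "unitary_mat d U" and P: "\<And>j. P j \<in> carrier_mat d d"
    and cycle: "\<And>j. U * P j * mat_adjoint U = \<gamma> j \<cdot>\<^sub>m P (Suc j)"
    and period: "P N = P 0" and nonzero: "P 0 \<noteq> 0\<^sub>m d d"
  shows "cmod (\<Prod>j<N. \<gamma> j) = 1"
proof -
  have decay: "frobenius_sq (P 0) = (cmod (\<Prod>i<j. \<gamma> i))\<^sup>2 * frobenius_sq (P j)" for j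
  proof (induct j)
    case (Suc j)
    have "frobenius_sq (P j) = frobenius_sq (\<gamma> j \<cdot>\<^sub>m P (Suc j))"
      using frobenius_sq_unitary_conj[OF U P, of j] by (simp only: cycle)
    also have "\<dots> = (cmod (\<gamma> j))\<^sup>2 * frobenius_sq (P (Suc j))" by (rule frobenius_sq_smult)
    finally show ?case using Suc by (simp add: norm_mult power_mult_distrib)
  qed simp
  have "dim_row (P 0) = d" "dim_col (P 0) = d" using P[of 0] by auto
  then have "frobenius_sq (P 0) > 0" using nonzero by (intro frobenius_sq_pos) simp
  moreover have "frobenius_sq (P 0) * 1 = frobenius_sq (P 0) * (cmod (\<Prod>j<N. \<gamma> j))\<^sup>2"
    using decay[of N] by (simp add: period)
  ultimately have "(cmod (\<Prod>j<N. \<gamma> j))\<^sup>2 = 1" by (simp only: mult_cancel_left) simp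
  then show ?thesis using norm_ge_zero[of "\<Prod>j<N. \<gamma> j"] by (auto simp: power2_eq_1_iff)
qed

lemma smult_smult_mat: "a \<cdot>\<^sub>m (b \<cdot>\<^sub>m A) = (a * b :: 'a::semigroup_mult) \<cdot>\<^sub>m A"
  by (rule eq_matI) (auto simp: mult.assoc)

lemma conj_cycle_eigen_combination:
  fixes P :: "nat \<Rightarrow> 'a::field mat"
  assumes U: "U \<in> carrier_mat d d" and V: "V \<in> carrier_mat d d" and P: "\<And>j. P j \<in> carrier_mat d d"
    and cycle: "\<And>j. U * P j * V = \<gamma> j \<cdot>\<^sub>m P (Suc j)" and period: "P N = P 0"
    and root: "\<mu> ^ N = (\<Prod>j<N. \<gamma> j)" "\<mu> \<noteq> 0"
  defines "Q \<equiv> mat_sum d d (\<lambda>j. ((\<Prod>i<j. \<gamma> i) / \<mu> ^ j) \<cdot>\<^sub>m P j) N"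
  shows "U * Q * V = \<mu> \<cdot>\<^sub>m Q"
proof -
  define c where "c j = (\<Prod>i<j. \<gamma> i) / \<mu> ^ j" for j
  have c_step: "c j * \<gamma> j = \<mu> * c (Suc j)" for j
    unfolding c_def using root(2) by (simp add: field_simps)
  have "U * (c j \<cdot>\<^sub>m P j) * V = \<mu> \<cdot>\<^sub>m (c (Suc j) \<cdot>\<^sub>m P (Suc j))" for j
  proof -
    have "U * (c j \<cdot>\<^sub>m P j) * V = c j \<cdot>\<^sub>m (U * P j * V)"
      using U V P[of j] by (simp add: mult_smult_distrib[OF U] mult_smult_assoc_mat[of _ d d _ d])
    also have "\<dots> = \<mu> \<cdot>\<^sub>m (c (Suc j) \<cdot>\<^sub>m P (Suc j))"
      by (simp add: cycle smult_smult_mat c_step)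
    finally show ?thesis .
  qed
  then have "U * Q * V = mat_sum d d (\<lambda>j. \<mu> \<cdot>\<^sub>m (c (Suc j) \<cdot>\<^sub>m P (Suc j))) N"
    unfolding Q_def c_def[symmetric] using U V P
    by (simp add: mult_mat_sum_left[of U d d] mult_mat_sum_right[OF V])
  also have "\<dots> = \<mu> \<cdot>\<^sub>m mat_sum d d (\<lambda>j. c (Suc j) \<cdot>\<^sub>m P (Suc j)) N"
    using P by (intro mat_sum_smult) simp
  also have "mat_sum d d (\<lambda>j. c (Suc j) \<cdot>\<^sub>m P (Suc j)) N = Q"
  proof -
    have "c N = c 0" unfolding c_def root(1)[symmetric] using root(2) by simp
    then show ?thesis unfolding Q_def c_def[symmetric] by (intro mat_sum_shift) (simp add: period)
  qed
  finally show ?thesis .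
qed

lemma sum_inverse_pow_roots:
  assumes "j < N"
  shows "(\<Sum>s<N. 1 / cis ((\<phi> + 2 * pi * real s) / real N) ^ j) = (if j = 0 then of_nat N else 0)"
proof (cases "j = 0")
  case False
  define \<omega> where "\<omega> = 1 / cis (2 * pi * real j / real N)"
  have "cis (2 * pi * real j / real N) \<noteq> cis (2 * pi * real 0 / real N)"
    using inj_onD[OF bij_betw_imp_inj_on[OF bij_betw_roots_unity], of N j 0] False assms by auto
  then have "\<omega> \<noteq> 1" unfolding \<omega>_def by auto
  moreover have "\<omega> ^ N = 1"
  proof -
    have "cis (2 * pi * real j / real N) ^ N = cis (2 * pi * real j)"
      using assms by (simp add: DeMoivre)
    then show ?thesis unfolding \<omega>_def by (simp add: power_divide)
  qed
  moreover have "1 / cis ((\<phi> + 2 * pi * real s) / real N) ^ j = 1 / cis (real j * \<phi> / real N) * \<omega> ^ s" for s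
  proof -
    have "cis ((\<phi> + 2 * pi * real s) / real N) ^ j = cis (real j * \<phi> / real N) * cis (2 * pi * real j / real N) ^ s"
      by (simp add: DeMoivre cis_mult add_divide_distrib algebra_simps)
    then show ?thesis unfolding \<omega>_def by (simp add: power_divide)
  qed
  ultimately show ?thesis using False by (simp add: sum_divide_distrib[symmetric] sum_gp_strict)
qed simp

text \<open>Summed over s, the combinations collapse to N times the j = 0 term, so they cannot all be
  scalar when p 0 is not.\<close>
lemma exists_nonscalar_combination:
  fixes p :: "nat \<Rightarrow> 'a::field_char_0 mat"
  assumes N: "N \<ge> 1" and p: "\<And>j. p j \<in> carrier_mat d d"
    and nonscalar: "\<not> (\<exists>\<kappa>. p 0 = \<kappa> \<cdot>\<^sub>m 1\<^sub>m d)" and c0: "c 0 = 1"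
    and orth: "\<And>j. j < N \<Longrightarrow> (\<Sum>s<N. 1 / \<mu> s ^ j) = (if j = 0 then of_nat N else 0)"
  shows "\<exists>s<N. \<not> (\<exists>\<kappa>. mat_sum d d (\<lambda>j. (c j / \<mu> s ^ j) \<cdot>\<^sub>m p j) N = \<kappa> \<cdot>\<^sub>m 1\<^sub>m d)"
proof (rule ccontr)
  have pdim: "dim_row (p j) = d" "dim_col (p j) = d" for j using p[of j] by auto
  assume "\<not> ?thesis"
  then obtain \<kappa> where \<kappa>: "\<And>s. s < N \<Longrightarrow> mat_sum d d (\<lambda>j. (c j / \<mu> s ^ j) \<cdot>\<^sub>m p j) N = \<kappa> s \<cdot>\<^sub>m 1\<^sub>m d"
    by metis
  have "p 0 = ((\<Sum>s<N. \<kappa> s) / of_nat N) \<cdot>\<^sub>m 1\<^sub>m d"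
  proof (rule eq_matI)
    fix i l assume "i < dim_row (((\<Sum>s<N. \<kappa> s) / of_nat N) \<cdot>\<^sub>m 1\<^sub>m d)"
      "l < dim_col (((\<Sum>s<N. \<kappa> s) / of_nat N) \<cdot>\<^sub>m 1\<^sub>m d)"
    then have i: "i < d" and l: "l < d" by simp_all
    have "(\<Sum>s<N. \<kappa> s) * (if i = l then 1 else 0)
        = (\<Sum>s<N. mat_sum d d (\<lambda>j. (c j / \<mu> s ^ j) \<cdot>\<^sub>m p j) N $$ (i, l))"
      using i l \<kappa> by (simp add: sum_distrib_right)
    also have "\<dots> = (\<Sum>s<N. \<Sum>j<N. 1 / \<mu> s ^ j * (c j * p j $$ (i, l)))"
      using i l by (intro sum.cong refl) (simp add: pdim)
    also have "\<dots> = (\<Sum>j<N. (\<Sum>s<N. 1 / \<mu> s ^ j) * (c j * p j $$ (i, l)))"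
      by (subst sum.swap) (simp add: sum_distrib_right)
    also have "\<dots> = (\<Sum>j<N. if j = 0 then of_nat N * (c j * p j $$ (i, l)) else 0)"
      by (rule sum.cong) (simp_all add: orth)
    also have "\<dots> = of_nat N * p 0 $$ (i, l)"
      using N c0 by simp
    finally show "p 0 $$ (i, l) = (((\<Sum>s<N. \<kappa> s) / of_nat N) \<cdot>\<^sub>m 1\<^sub>m d) $$ (i, l)"
      using i l N by (simp add: field_simps)
  qed (use p in auto)
  then show False using nonscalar by blast
qed

section \<open>Local conserved operators\<close>

lemma cis_roots_of_unimodular:
  assumes "cmod z = 1" "N \<ge> 1"
  shows "\<exists>\<phi>. \<forall>s. cis ((\<phi> + 2 * pi * real s) / real N) ^ N = z"
proof -
  have "z \<noteq> 0" using assms(1) by auto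
  then have "cis (Arg z) = z" using cis_Arg[of z] assms(1) by (simp add: sgn_eq)
  moreover have "cis ((Arg z + 2 * pi * real s) / real N) ^ N = cis (Arg z)" for s
    using assms(2) by (simp add: DeMoivre flip: cis_mult)
  ultimately show ?thesis by metis
qed

lemma conserved_of_local_cycle:
  assumes U: "unitary_mat (2 ^ n) U" and akn: "a + k \<le> n" and N: "N \<ge> 1"
    and p: "\<And>j. p j \<in> carrier_mat (2 ^ k) (2 ^ k)" and period: "p N = p 0"
    and nonscalar: "\<not> (\<exists>c. p 0 = c \<cdot>\<^sub>m 1\<^sub>m (2 ^ k))"
    and cycle: "\<And>j. U * embed_block n a k (p j) * mat_adjoint U = \<gamma> j \<cdot>\<^sub>m embed_block n a k (p (Suc j))"
  shows "\<exists>QC \<theta>. QC \<in> carrier_mat (2 ^ k) (2 ^ k) \<and> \<not> (\<exists>c. QC = c \<cdot>\<^sub>m 1\<^sub>m (2 ^ k)) \<and>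
    U * embed_block n a k QC * mat_adjoint U = exp (\<i> * complex_of_real \<theta>) \<cdot>\<^sub>m embed_block n a k QC"
proof -
  let ?E = "embed_block n a k"
  have UV: "U \<in> carrier_mat (2 ^ n) (2 ^ n)" "mat_adjoint U \<in> carrier_mat (2 ^ n) (2 ^ n)"
    using U unfolding unitary_mat_def by auto
  have P: "?E (p j) \<in> carrier_mat (2 ^ n) (2 ^ n)" for j by (rule embed_block_carrier_mat[OF akn p])
  have "p 0 \<noteq> 0\<^sub>m (2 ^ k) (2 ^ k)"
  proof
    assume "p 0 = 0\<^sub>m (2 ^ k) (2 ^ k)"
    then have "p 0 = 0 \<cdot>\<^sub>m 1\<^sub>m (2 ^ k)" by (intro eq_matI) auto
    with nonscalar show False by blast
  qed
  then have "cmod (\<Prod>j<N. \<gamma> j) = 1"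
    using unitary_conj_cycle_unimodular[where P = "\<lambda>j. ?E (p j)", OF U P cycle]
      embed_block_neq_zero[OF akn p] period by simp
  then obtain \<phi> where root: "\<And>s. cis ((\<phi> + 2 * pi * real s) / real N) ^ N = (\<Prod>j<N. \<gamma> j)"
    using cis_roots_of_unimodular N by metis
  define \<mu> where "\<mu> s = cis ((\<phi> + 2 * pi * real s) / real N)" for s
  obtain s where "s < N"
    and nonscalar_QC: "\<not> (\<exists>c. mat_sum (2 ^ k) (2 ^ k) (\<lambda>j. ((\<Prod>i<j. \<gamma> i) / \<mu> s ^ j) \<cdot>\<^sub>m p j) N = c \<cdot>\<^sub>m 1\<^sub>m (2 ^ k))"
    using exists_nonscalar_combination[where p = p and c = "\<lambda>j. \<Prod>i<j. \<gamma> i" and \<mu> = \<mu>, OF N p nonscalar]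
      sum_inverse_pow_roots by (auto simp: \<mu>_def)
  define QC where "QC = mat_sum (2 ^ k) (2 ^ k) (\<lambda>j. ((\<Prod>i<j. \<gamma> i) / \<mu> s ^ j) \<cdot>\<^sub>m p j) N"
  have "?E QC = mat_sum (2 ^ n) (2 ^ n) (\<lambda>j. ((\<Prod>i<j. \<gamma> i) / \<mu> s ^ j) \<cdot>\<^sub>m ?E (p j)) N"
    unfolding QC_def using p by (simp add: embed_block_mat_sum[OF akn] embed_block_smult)
  then have "U * ?E QC * mat_adjoint U = \<mu> s \<cdot>\<^sub>m ?E QC"
    using conj_cycle_eigen_combination[where P = "\<lambda>j. ?E (p j)", OF UV P cycle _ root[of s]] period
    by (simp add: \<mu>_def)
  also have "\<mu> s = exp (\<i> * complex_of_real ((\<phi> + 2 * pi * real s) / real N))"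
    unfolding \<mu>_def by (rule cis_conv_exp)
  finally have "U * ?E QC * mat_adjoint U = exp (\<i> * complex_of_real ((\<phi> + 2 * pi * real s) / real N)) \<cdot>\<^sub>m ?E QC" .
  moreover have "QC \<in> carrier_mat (2 ^ k) (2 ^ k)" by (simp add: QC_def)
  ultimately show ?thesis using nonscalar_QC unfolding QC_def by blast
qed

lemma restrict_sites_neq_zero:
  assumes "v \<in> Vsub n {a..<a + k}" "v \<noteq> 0\<^sub>v (2 * n)"
  shows "\<exists>j < 2 * k. restrict_sites a k v $ j \<noteq> 0"
proof -
  have "v \<in> carrier_vec (2 * n)" using assms(1) by (rule Vsub_carrier)
  then obtain j where j: "j < 2 * n" "v $ j \<noteq> 0" using assms(2) by (metis eq_vecI carrier_vecD index_zero_vec)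
  then have "j div 2 \<in> {a..<a + k}" using Vsub_vanish[OF assms(1)] by blast
  then have "2 * a \<le> j" "j - 2 * a < 2 * k" by auto
  then show ?thesis using j(2) by (intro exI[of _ "j - 2 * a"]) (simp add: restrict_sites_def)
qed

lemma clifford_orbit_cycle:
  assumes "clifford_with n U W" "v \<in> carrier_vec (2 * n)"
  shows "\<exists>\<gamma>. \<forall>j. U * pauli n (W ^\<^sub>m j *\<^sub>v v) * mat_adjoint U = \<gamma> j \<cdot>\<^sub>m pauli n (W ^\<^sub>m Suc j *\<^sub>v v)"
proof -
  have W: "W \<in> carrier_mat (2 * n) (2 * n)"
    using assms(1) unfolding clifford_with_def symplectic_def by auto
  have "\<exists>c. U * pauli n (W ^\<^sub>m j *\<^sub>v v) * mat_adjoint U = c \<cdot>\<^sub>m pauli n (W ^\<^sub>m Suc j *\<^sub>v v)" for j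
  proof -
    have "W ^\<^sub>m Suc j *\<^sub>v v = W *\<^sub>v (W ^\<^sub>m j *\<^sub>v v)"
      unfolding pow_mat_Suc_left[OF W]
      using W assms(2) by (simp add: assoc_mult_mat_vec[of _ "2 * n" "2 * n" _ "2 * n"])
    moreover have "W ^\<^sub>m j *\<^sub>v v \<in> carrier_vec (2 * n)"
      using W assms(2) by (metis mult_mat_vec_carrier pow_carrier_mat)
    ultimately show ?thesis using assms(1) unfolding clifford_with_def by simp
  qed
  then show ?thesis by metis
qed

lemma clifford_conserved_of_local_orbit:
  assumes cl: "clifford_with n U W" and akn: "a + k \<le> n"
    and N: "N \<ge> 1" "W ^\<^sub>m N = 1\<^sub>m (2 * n)"
    and v: "v \<in> carrier_vec (2 * n)" "v \<noteq> 0\<^sub>v (2 * n)"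
    and local: "\<And>t. W ^\<^sub>m t *\<^sub>v v \<in> Vsub n {a..<a + k}"
  shows "\<exists>QC \<theta>. QC \<in> carrier_mat (2 ^ k) (2 ^ k) \<and> \<not> (\<exists>c. QC = c \<cdot>\<^sub>m 1\<^sub>m (2 ^ k)) \<and>
    U * embed_block n a k QC * mat_adjoint U = exp (\<i> * complex_of_real \<theta>) \<cdot>\<^sub>m embed_block n a k QC"
proof -
  define p where "p j = pauli k (restrict_sites a k (W ^\<^sub>m j *\<^sub>v v))" for j
  have U: "unitary_mat (2 ^ n) U" and W: "W \<in> carrier_mat (2 * n) (2 * n)"
    using cl unfolding clifford_with_def symplectic_def by auto
  have "embed_block n a k (p j) = pauli n (W ^\<^sub>m j *\<^sub>v v)" for j
    unfolding p_def using pauli_supported_block[OF akn local] by simp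
  then obtain \<gamma> where cycle: "\<And>j. U * embed_block n a k (p j) * mat_adjoint U
      = \<gamma> j \<cdot>\<^sub>m embed_block n a k (p (Suc j))"
    using clifford_orbit_cycle[OF cl v(1)] by metis
  have period: "p N = p 0" unfolding p_def using N(2) W v(1) by simp
  have "\<exists>j < 2 * k. restrict_sites a k (W ^\<^sub>m 0 *\<^sub>v v) $ j \<noteq> 0"
    using restrict_sites_neq_zero[OF local[of 0]] v W by simp
  then have nonscalar: "\<not> (\<exists>c. p 0 = c \<cdot>\<^sub>m 1\<^sub>m (2 ^ k))"
    unfolding p_def by (rule pauli_not_scalar)
  have "p j \<in> carrier_mat (2 ^ k) (2 ^ k)" for j by (simp add: p_def)
  then show ?thesis
    by (rule conserved_of_local_cycle[where \<gamma> = \<gamma>, OF U akn N(1) _ period nonscalar cycle])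
qed

theorem lemma4:
  fixes n a k :: nat and U :: "complex mat" and W :: "bit mat"
  assumes "n \<ge> 3" and "a \<ge> 1" and "k \<ge> 1" and "a + k < n"
    and "clifford_with n U W"
    and "left_wall n W {0..<a} {a..<a+k}"
    and "G_int n W {0..<a} {a..<a+k} \<inter> G_int n W {a+k..<n} {a..<a+k} \<noteq> {0\<^sub>v (2*n)}"
  shows "\<exists>QC \<theta>. QC \<in> carrier_mat (2^k) (2^k) \<and> \<not> (\<exists>c::complex. QC = c \<cdot>\<^sub>m 1\<^sub>m (2^k)) \<and>
     (let Q = kron (kron (1\<^sub>m (2^a)) QC) (1\<^sub>m (2^(n-a-k)))
      in U * Q * mat_adjoint U = exp (\<i> * complex_of_real \<theta>) \<cdot>\<^sub>m Q)"
proof -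
  have symp: "symplectic n W" using assms(5) unfolding clifford_with_def by simp
  have "0\<^sub>v (2 * n) \<in> G_int n W S {a..<a + k}" for S
    unfolding G_int_def using z2span.zero by (force simp: projS_def)
  then obtain v where vL: "v \<in> G_int n W {0..<a} {a..<a + k}" and vR: "v \<in> G_int n W {a + k..<n} {a..<a + k}"
    and v0: "v \<noteq> 0\<^sub>v (2 * n)"
    using assms(7) by blast
  have "v \<in> carrier_vec (2 * n)" using vL unfolding G_int_def projS_def by auto
  moreover have "W ^\<^sub>m t *\<^sub>v v \<in> Vsub n {a..<a + k}" for t
    by (rule G_int_orbit_stays_in_center[OF symp assms(6) _ _ vL vR]) auto
  moreover obtain N where "N \<ge> 1" "W ^\<^sub>m N = 1\<^sub>m (2 * n)" using symplectic_finite_order[OF symp] by blast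
  ultimately show ?thesis
    using clifford_conserved_of_local_orbit[OF assms(5)] assms(4) v0 by (simp add: Let_def embed_block_def)
qed

end
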